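(* There is an absolute constant $C>0$ such that the following holds. Let $X_1,X_2,\ldots$ be independent with density $e^{x-1}$ for $x\le1$ and $0$ for $x>1$; $S_0=0$, $S_j=X_1+\cdots+X_j$; $f_m(x)=\frac{(m-x)^{m-1}}{e^{m-x}(m-1)!}$ for $x\le m$ and $f_m(x)=0$ for $x>m$ (the density of $S_m$); and $R_m(x,y)=\frac{d}{dx}\mathbf{P}[\max_{0\le j\le m-1}S_j<y,\ S_m\le x]$. Then for every integer $k\ge1$, real $y\ge0$ and real $0\le\mu\le1$, $$R_k(y+\mu,y)\le C\,\frac{y+1}{k}\,f_k(y).$$ *)

theory Defs
  imports "HOL-Probability.Probability"
begin

definition step_density :: "real \<Rightarrow> real" where
  "step_density x = (if x \<le> 1 then exp (x - 1) else 0)"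

definition step_dist :: "real measure" where
  "step_dist = density lborel (\<lambda>x. ennreal (step_density x))"

text \<open>Joint law of (X_1,...,X_m), indexed by 0..m-1 (independent, i.e. product measure).\<close>
definition walk_space :: "nat \<Rightarrow> (nat \<Rightarrow> real) measure" where
  "walk_space m = PiM {..<m} (\<lambda>_. step_dist)"

definition partial_sum :: "(nat \<Rightarrow> real) \<Rightarrow> nat \<Rightarrow> real" where
  "partial_sum \<omega> j = (\<Sum>i<j. \<omega> i)"

definition walk_cdf :: "nat \<Rightarrow> real \<Rightarrow> real \<Rightarrow> real" where
  "walk_cdf m y x = measure (walk_space m)
     {\<omega> \<in> space (walk_space m). (\<forall>j<m. partial_sum \<omega> j < y) \<and> partial_sum \<omega> m \<le> x}"

definition f_dens :: "nat \<Rightarrow> real \<Rightarrow> real" where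
  "f_dens m x = (if x \<le> real m
     then (real m - x) ^ (m - 1) / (exp (real m - x) * fact (m - 1)) else 0)"

end

theory Submission
  imports Defs
begin

(* Away from the bulk (k < 3 or y + 1 >= k/2) the factor (y + 1)/k is bounded below, and the
  derivative is at most f_k(y + mu) <= e^mu f_k(y), because increments of the distribution
  function are bounded by those of the law of S_k.

  In the bulk, the last step has density at most 1 and is at most 1, so an increment of the
  distribution function over (a, b] with a >= y - 1/8 is at most (b - a) times the probability
  that S_0, ..., S_{k-1} < y and S_{k-1} > a - 1.  Appending two steps in (7/8, 1], each of
  probability at least 7/64, turns such a path into one of length k + 1 that ends in
  J = (y + 5/8, y + 2] and whose final gap S_{k+1} - max_{j <= k} S_j exceeds 1/2.  By the cycle
  lemma the positive parts of the final gaps of the k + 1 cyclic rotations of the steps add up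
  to S_{k+1} whenever S_{k+1} > 0; since the law of the steps is rotation invariant, Markov's
  inequality gives (k + 1) P[gap > 1/2, S_{k+1} in J] <= 2 E[S_{k+1}; S_{k+1} in J]
  <= 2 (y + 2) |J| max_J f_{k+1}, and f_{k+1} <= 20 f_k(y) on J in the bulk. *)

lemma step_density_le_1: "step_density x \<le> 1"
  by (simp add: step_density_def)

lemma borel_measurable_step_density [measurable]: "step_density \<in> borel_measurable borel"
  unfolding step_density_def by measurable

lemma step_density_eq_exponential_density: "step_density x = exponential_density 1 (1 - x)"
  by (simp add: step_density_def exponential_density_def)

lemma prob_space_step_dist: "prob_space step_dist"
proof
  have "emeasure step_dist (space step_dist) = (\<integral>\<^sup>+x. ennreal (exponential_density 1 (1 + (-1) * x)) \<partial>lborel)"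
    by (simp add: step_dist_def emeasure_density step_density_eq_exponential_density)
  also have "\<dots> = (\<integral>\<^sup>+x. ennreal (exponential_density 1 x) \<partial>lborel)"
    by (subst nn_integral_real_affine[where c="-1" and t=1]) auto
  also have "\<dots> = 1"
    using prob_space.emeasure_space_1[OF prob_space_exponential_density[of 1]]
    by (simp add: emeasure_density)
  finally show "emeasure step_dist (space step_dist) = 1" .
qed

interpretation step_dist: prob_space step_dist
  by (rule prob_space_step_dist)

lemma space_step_dist [simp]: "space step_dist = UNIV"
  by (simp add: step_dist_def)

lemma sets_step_dist [simp, measurable_cong]: "sets step_dist = sets borel"
  by (simp add: step_dist_def)

lemma nn_integral_step_dist:
  "f \<in> borel_measurable borel \<Longrightarrow>
    (\<integral>\<^sup>+u. f u \<partial>step_dist) = (\<integral>\<^sup>+u. ennreal (step_density u) * f u \<partial>lborel)"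
  unfolding step_dist_def by (simp add: nn_integral_density)

interpretation steps: product_sigma_finite "\<lambda>_::nat. step_dist"
  by unfold_locales

lemma prob_space_walk_space: "prob_space (walk_space m)"
  unfolding walk_space_def by (rule prob_space_PiM) (rule prob_space_step_dist)

lemma emeasure_walk_space_eq_measure: "emeasure (walk_space m) A = ennreal (measure (walk_space m) A)"
proof -
  interpret prob_space "walk_space m"
    by (rule prob_space_walk_space)
  show ?thesis
    by (rule emeasure_eq_measure)
qed

lemma space_walk_space: "space (walk_space m) = PiE {..<m} (\<lambda>_. UNIV)"
  by (simp add: walk_space_def space_PiM)

lemma fun_upd_in_space_walk_space:
  "w \<in> space (walk_space n) \<Longrightarrow> w(n := u) \<in> space (walk_space (Suc n))"
  unfolding space_walk_space lessThan_Suc by (rule PiE_fun_upd) auto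

lemma nn_integral_walk_space_Suc:
  assumes "F \<in> borel_measurable (walk_space (Suc m))"
  shows "(\<integral>\<^sup>+w. F w \<partial>walk_space (Suc m)) =
    (\<integral>\<^sup>+w. (\<integral>\<^sup>+u. F (w(m := u)) \<partial>step_dist) \<partial>walk_space m)"
proof -
  have "{..<Suc m} = insert m {..<m}" by auto
  then show ?thesis
    using steps.product_nn_integral_insert[of "{..<m}" m F] assms
    unfolding walk_space_def by simp
qed

lemma partial_sum_0 [simp]: "partial_sum w 0 = 0"
  by (simp add: partial_sum_def)

lemma partial_sum_Suc: "partial_sum w (Suc n) = partial_sum w n + w n"
  by (simp add: partial_sum_def)

lemma partial_sum_fun_upd: "j \<le> m \<Longrightarrow> partial_sum (w(m := u)) j = partial_sum w j"
  unfolding partial_sum_def by (intro sum.cong) auto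

lemma partial_sum_fun_upd_Suc: "partial_sum (w(m := u)) (Suc m) = partial_sum w m + u"
  by (simp add: partial_sum_Suc partial_sum_fun_upd)

lemma borel_measurable_partial_sum [measurable]:
  "j \<le> m \<Longrightarrow> (\<lambda>w. partial_sum w j) \<in> borel_measurable (walk_space m)"
  unfolding partial_sum_def walk_space_def
  by (intro borel_measurable_sum)
    (auto intro!: measurable_component_singleton[where M="\<lambda>_. step_dist", simplified])

lemma pred_partial_sums_less:
  assumes "l \<le> Suc m"
  shows "Measurable.pred (walk_space m) (\<lambda>w. \<forall>j<l. partial_sum w j < y)"
proof -
  have "Measurable.pred (walk_space m) (\<lambda>w. \<forall>j\<in>{..<l}. partial_sum w j < y)"
    using assms by (intro pred_intros_finite(3)) auto
  then show ?thesis by (simp only: lessThan_iff Ball_def)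
qed

section \<open>The density of the partial sums\<close>

lemma f_dens_nonneg: "0 \<le> f_dens m s"
  by (simp add: f_dens_def)

lemma borel_measurable_f_dens [measurable]: "f_dens m \<in> borel_measurable borel"
  unfolding f_dens_def by measurable

lemma f_dens_1: "f_dens 1 s = step_density s"
  by (simp add: f_dens_def step_density_def exp_diff exp_minus field_simps)

lemma f_dens_Suc_times_step_density:
  "ennreal (f_dens (Suc n) z) * ennreal (step_density (x - z)) =
   ennreal (exp (x - real n - 2) * (real n + 1 - z) ^ n / fact n) * indicator {x - 1 .. real n + 1} z"
proof (cases "x - 1 \<le> z \<and> z \<le> real n + 1")
  case True
  have "exp (x - z - 1) / exp (real n + 1 - z) = exp (x - real n - 2)"
    by (simp add: exp_diff[symmetric])
  moreover have "f_dens (Suc n) z * step_density (x - z) =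
      (real n + 1 - z) ^ n / fact n * (exp (x - z - 1) / exp (real n + 1 - z))"
    using True by (simp add: f_dens_def step_density_def field_simps add.commute)
  ultimately show ?thesis
    using True by (simp add: ennreal_mult'[symmetric] f_dens_nonneg)
next
  case False
  then have "f_dens (Suc n) z = 0 \<or> step_density (x - z) = 0"
    by (auto simp: f_dens_def step_density_def add.commute)
  then show ?thesis using False by auto
qed

lemma f_dens_Suc_Suc_convolution:
  "(\<integral>\<^sup>+z. ennreal (f_dens (Suc n) z) * ennreal (step_density (x - z)) \<partial>lborel) =
    ennreal (f_dens (Suc (Suc n)) x)"
proof (cases "x - 1 \<le> real n + 1")
  case True
  define F where "F z = - (exp (x - real n - 2) * (real n + 1 - z) ^ Suc n / fact (Suc n))" for z
  have "DERIV F z :> exp (x - real n - 2) * (real n + 1 - z) ^ n / fact n" for z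
    unfolding F_def by (rule derivative_eq_intros refl | simp add: fact_Suc divide_simps)+
  then have "(\<integral>\<^sup>+z. ennreal (f_dens (Suc n) z) * ennreal (step_density (x - z)) \<partial>lborel) =
      F (real n + 1) - F (x - 1)"
    unfolding f_dens_Suc_times_step_density using True by (intro nn_integral_FTC_Icc) auto
  also have "\<dots> = f_dens (Suc (Suc n)) x"
    using True by (simp add: F_def f_dens_def exp_diff field_simps)
  finally show ?thesis .
next
  case False
  then have "{x - 1 .. real n + 1} = {}" by simp
  then show ?thesis using False by (simp add: f_dens_Suc_times_step_density) (simp add: f_dens_def)
qed

lemma nn_integral_f_dens_Suc_Suc:
  assumes [measurable]: "g \<in> borel_measurable borel"
  shows "(\<integral>\<^sup>+z. ennreal (f_dens (Suc n) z) * (\<integral>\<^sup>+u. ennreal (step_density u) * g (z + u) \<partial>lborel) \<partial>lborel) =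
    (\<integral>\<^sup>+x. ennreal (f_dens (Suc (Suc n)) x) * g x \<partial>lborel)"
proof -
  have "(\<integral>\<^sup>+u. ennreal (step_density u) * g (z + u) \<partial>lborel) =
      (\<integral>\<^sup>+x. ennreal (step_density (x - z)) * g x \<partial>lborel)" for z
    by (subst nn_integral_real_affine[where c=1 and t=z]) (auto simp: add.commute)
  then have "(\<integral>\<^sup>+z. ennreal (f_dens (Suc n) z) * (\<integral>\<^sup>+u. ennreal (step_density u) * g (z + u) \<partial>lborel) \<partial>lborel) =
      (\<integral>\<^sup>+z. (\<integral>\<^sup>+x. ennreal (f_dens (Suc n) z) * ennreal (step_density (x - z)) * g x \<partial>lborel) \<partial>lborel)"
    by (simp add: nn_integral_cmult mult.assoc)
  also have "\<dots> = (\<integral>\<^sup>+x. (\<integral>\<^sup>+z. ennreal (f_dens (Suc n) z) * ennreal (step_density (x - z)) * g x \<partial>lborel) \<partial>lborel)"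
    by (rule lborel_pair.Fubini'[symmetric]) measurable
  also have "\<dots> = (\<integral>\<^sup>+x. ennreal (f_dens (Suc (Suc n)) x) * g x \<partial>lborel)"
    by (simp add: nn_integral_multc f_dens_Suc_Suc_convolution)
  finally show ?thesis .
qed

lemma nn_integral_partial_sum_Suc:
  "g \<in> borel_measurable borel \<Longrightarrow>
    (\<integral>\<^sup>+w. g (partial_sum w (Suc n)) \<partial>walk_space (Suc n)) =
    (\<integral>\<^sup>+s. ennreal (f_dens (Suc n) s) * g s \<partial>lborel)"
proof (induction n arbitrary: g)
  case 0
  have "walk_space (Suc 0) = PiM {0} (\<lambda>_. step_dist)"
    unfolding walk_space_def by (simp add: lessThan_Suc)
  then have "(\<integral>\<^sup>+w. g (partial_sum w (Suc 0)) \<partial>walk_space (Suc 0)) = (\<integral>\<^sup>+u. g u \<partial>step_dist)"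
    using 0 by (simp add: partial_sum_def steps.product_nn_integral_singleton)
  then show ?case
    using 0 by (simp add: nn_integral_step_dist f_dens_1[simplified])
next
  case (Suc n)
  note [measurable] = Suc.prems
  have "(\<integral>\<^sup>+w. g (partial_sum w (Suc (Suc n))) \<partial>walk_space (Suc (Suc n))) =
      (\<integral>\<^sup>+w. (\<integral>\<^sup>+u. ennreal (step_density u) * g (partial_sum w (Suc n) + u) \<partial>lborel) \<partial>walk_space (Suc n))"
    by (subst nn_integral_walk_space_Suc) (simp_all add: partial_sum_fun_upd_Suc nn_integral_step_dist)
  also have "\<dots> = (\<integral>\<^sup>+z. ennreal (f_dens (Suc n) z) * (\<integral>\<^sup>+u. ennreal (step_density u) * g (z + u) \<partial>lborel) \<partial>lborel)"
    by (rule Suc.IH) measurable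
  also have "\<dots> = (\<integral>\<^sup>+x. ennreal (f_dens (Suc (Suc n)) x) * g x \<partial>lborel)"
    by (rule nn_integral_f_dens_Suc_Suc) measurable
  finally show ?case .
qed

lemma nn_integral_partial_sum:
  "1 \<le> m \<Longrightarrow> g \<in> borel_measurable borel \<Longrightarrow>
    (\<integral>\<^sup>+w. g (partial_sum w m) \<partial>walk_space m) = (\<integral>\<^sup>+s. ennreal (f_dens m s) * g s \<partial>lborel)"
  using nn_integral_partial_sum_Suc[of g "m - 1"] by simp

lemma power_add_le_exp:
  fixes d c :: real
  assumes "0 < d" "0 \<le> c"
  shows "(d + c) ^ n \<le> d ^ n * exp (real n * c / d)"
proof -
  have "(d + c) ^ n = d ^ n * (1 + c / d) ^ n"
    using assms by (simp add: power_mult_distrib[symmetric] field_simps)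
  also have "\<dots> \<le> d ^ n * exp (c / d) ^ n"
    using assms by (intro mult_left_mono power_mono exp_ge_add_one_self) simp_all
  also have "\<dots> = d ^ n * exp (real n * c / d)"
    by (simp add: exp_of_nat_mult[symmetric])
  finally show ?thesis .
qed

lemma f_dens_Suc_le_f_dens:
  assumes k: "3 \<le> k" and y: "0 \<le> y" "y + 1 < real k / 2" and s: "y + 5/8 < s" "s \<le> y + 2"
  shows "f_dens (Suc k) s \<le> 20 * f_dens k y"
proof -
  define d where "d = real k - y"
  define t where "t = real k + 1 - s"
  have d: "real (k - 1) \<le> 2 * d" "0 < d"
    using k y unfolding d_def by (simp_all add: of_nat_diff)
  have t: "0 < t" "t \<le> d + 3/8" "t \<le> real k + 1" "d - 1 \<le> t"
    using y s unfolding t_def d_def by simp_all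
  have f_Suc_k: "f_dens (Suc k) s = t ^ k / (exp t * fact k)"
    using s y unfolding f_dens_def t_def by (simp add: ac_simps)
  have f_k: "f_dens k y = d ^ (k - 1) / (exp d * fact (k - 1))"
    using y unfolding f_dens_def d_def by simp
  have fact_k: "fact k = real k * fact (k - 1)"
    using k by (cases k) auto
  have "t ^ (k - 1) \<le> d ^ (k - 1) * exp (real (k - 1) * (3/8) / d)"
    using power_mono[OF t(2), of "k - 1"] power_add_le_exp[OF d(2), of "3/8" "k - 1"] t(1) by linarith
  also have "\<dots> \<le> d ^ (k - 1) * exp (3/4)"
    using d by (intro mult_left_mono) (simp_all add: field_simps)
  finally have "t ^ k \<le> (real k + 1) * (d ^ (k - 1) * exp (3/4))"
    using k t(1,3) mult_mono[of t "real k + 1"] by (cases k) (auto simp del: of_nat_Suc)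
  then have "f_dens (Suc k) s \<le> (real k + 1) * (d ^ (k - 1) * exp (3/4)) / (exp (d - 1) * fact k)"
    unfolding f_Suc_k using t d by (intro frac_le mult_right_mono) auto
  also have "\<dots> = ((real k + 1) / real k) * (exp (3/4) * exp 1) * f_dens k y"
    unfolding f_k fact_k using k by (simp add: exp_diff field_simps)
  also have "\<dots> \<le> (4/3) * (3 * 3) * f_dens k y"
    using k exp_le order.trans[OF _ exp_le, of "exp (3/4)"]
    by (intro mult_mono) (auto simp: field_simps f_dens_nonneg)
  finally show ?thesis
    using f_dens_nonneg[of k y] by simp
qed

lemma f_dens_add_le:
  assumes "0 \<le> \<mu>"
  shows "f_dens k (y + \<mu>) \<le> exp \<mu> * f_dens k y"
proof (cases "y + \<mu> \<le> real k")
  case True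
  have "exp (real k - (y + \<mu>)) = exp (real k - y) / exp \<mu>"
    by (simp add: exp_diff[symmetric] algebra_simps)
  then have "f_dens k (y + \<mu>) = exp \<mu> * ((real k - (y + \<mu>)) ^ (k - 1) / (exp (real k - y) * fact (k - 1)))"
    using True by (simp add: f_dens_def)
  also have "\<dots> \<le> exp \<mu> * ((real k - y) ^ (k - 1) / (exp (real k - y) * fact (k - 1)))"
    using True assms by (intro mult_left_mono divide_right_mono power_mono) auto
  also have "\<dots> = exp \<mu> * f_dens k y"
    using True assms by (simp add: f_dens_def)
  finally show ?thesis .
qed (simp add: f_dens_def[of k "y + \<mu>"] f_dens_nonneg)

lemma f_dens_upper_semicontinuous:
  assumes "0 < e"
  shows "\<exists>d>0. \<forall>s. \<bar>s - x\<bar> < d \<longrightarrow> f_dens k s \<le> f_dens k x + e"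
proof (cases "x \<le> real k")
  case True
  define g where "g s = max 0 ((real k - s) ^ (k - 1) / (exp (real k - s) * fact (k - 1)))" for s
  have "continuous (at x) g"
    unfolding g_def by (intro continuous_intros) auto
  then obtain d where "0 < d" and d: "\<And>s. dist s x < d \<Longrightarrow> dist (g s) (g x) < e"
    using assms unfolding continuous_at_eps_delta by blast
  moreover have "f_dens k s \<le> g s" for s
    unfolding g_def f_dens_def by auto
  moreover have "g x = f_dens k x"
    using True unfolding g_def f_dens_def by (simp add: max_def)
  ultimately show ?thesis
    by (smt (verit, best) dist_real_def)
next
  case False
  then have "f_dens k s = 0" if "\<bar>s - x\<bar> < x - real k" for s
    using that by (auto simp: f_dens_def)
  then show ?thesis
    using False assms f_dens_nonneg[of k x] by (intro exI[of _ "x - real k"]) auto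
qed

section \<open>The cycle lemma\<close>

definition rot :: "nat \<Rightarrow> nat \<Rightarrow> (nat \<Rightarrow> real) \<Rightarrow> (nat \<Rightarrow> real)" where
  "rot m r w = (\<lambda>i\<in>{..<m}. w ((i + r) mod m))"

definition gap :: "nat \<Rightarrow> (nat \<Rightarrow> real) \<Rightarrow> real" where
  "gap m w = partial_sum w m - Max ((\<lambda>j. partial_sum w j) ` {..<m})"

lemma sum_mod_add_period:
  "(\<Sum>i<n + m. w (i mod m)) = (\<Sum>i<n. w (i mod m)) + partial_sum w m"
  by (induction n) (simp_all add: partial_sum_def)

lemma partial_sum_rot:
  "j \<le> m \<Longrightarrow> partial_sum (rot m r w) j = (\<Sum>i<r + j. w (i mod m)) - (\<Sum>i<r. w (i mod m))"
  by (induction j) (simp_all add: partial_sum_Suc rot_def add.commute)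

lemma partial_sum_rot_self: "partial_sum (rot m r w) m = partial_sum w m"
  using partial_sum_rot[of m m r w] sum_mod_add_period[where n=r and m=m and w=w]
  by (simp add: add.commute)

lemma Max_window_Suc_diff:
  fixes T :: "nat \<Rightarrow> 'a::linordered_ab_group_add"
  assumes "0 < m" and "T r < T (r + m)"
  shows "Max ((\<lambda>j. T (Suc r + j)) ` {..<m}) - Max ((\<lambda>j. T (r + j)) ` {..<m}) =
    max 0 (T (r + m) - Max ((\<lambda>j. T (r + j)) ` {..<m}))"
proof -
  obtain n where m: "m = Suc n" using assms(1) by (cases m) auto
  define B where "B = (\<lambda>j. T (Suc r + j)) ` {..<n}"
  have window: "(\<lambda>j. T (r + j)) ` {..<m} = insert (T r) B"
    unfolding B_def m lessThan_Suc_eq_insert_0 by (auto simp: image_image)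
  have window_Suc: "(\<lambda>j. T (Suc r + j)) ` {..<m} = insert (T (r + m)) B"
    unfolding B_def m by (auto simp: lessThan_Suc)
  have max_diff: "max x b - max y b = max 0 (x - max y b)" if "y < x" for x y b :: 'a
    using that by (auto simp: max_def)
  have "finite B" by (simp add: B_def)
  then show ?thesis
    unfolding window window_Suc using assms(2) max_diff by (cases "B = {}") simp_all
qed

lemma sum_rot_gap_pos_part:
  assumes m: "0 < m" and pos: "0 < partial_sum w m"
  shows "(\<Sum>r<m. max 0 (gap m (rot m r w))) = partial_sum w m"
proof -
  (* T is the partial-sum sequence of the periodic extension of w; the positive part of the
    gap of the r-th rotation is the increment of the sliding-window maximum A at r. *)
  define T where "T n = (\<Sum>i<n. w (i mod m))" for n
  define A where "A r = Max ((\<lambda>j. T (r + j)) ` {..<m})" for r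
  have ne: "{..<m} \<noteq> {}" using m by auto
  have T_period: "T (n + m) = T n + partial_sum w m" for n
    unfolding T_def by (rule sum_mod_add_period)
  have gap_rot: "gap m (rot m r w) = T (r + m) - A r" for r
  proof -
    have "(\<lambda>j. partial_sum (rot m r w) j) ` {..<m} = (\<lambda>j. T (r + j) + (- T r)) ` {..<m}"
      by (intro image_cong) (auto simp: partial_sum_rot T_def)
    then have "Max ((\<lambda>j. partial_sum (rot m r w) j) ` {..<m}) = A r - T r"
      unfolding A_def using ne Max_add_commute[of "{..<m}" "\<lambda>j. T (r + j)" "- T r"] by simp
    then show ?thesis unfolding gap_def using partial_sum_rot[of m m r w] by (simp add: T_def)
  qed
  have "(\<Sum>r<m. max 0 (gap m (rot m r w))) = (\<Sum>r<m. A (Suc r) - A r)"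
    using Max_window_Suc_diff[OF m, of T] T_period pos by (simp add: gap_rot A_def)
  also have "\<dots> = A m - A 0"
    by (rule sum_lessThan_telescope)
  also have "A m = A 0 + partial_sum w m"
    unfolding A_def using ne T_period
      Max_add_commute[of "{..<m}" "\<lambda>j. T j" "partial_sum w m"] by (simp add: add.commute)
  finally show ?thesis by simp
qed

lemma inj_on_add_mod: "inj_on (\<lambda>i::nat. (i + r) mod m) {..<m}"
proof (rule linorder_inj_onI)
  fix i j assume "i < j" "j \<in> {..<m}"
  then have "\<not> m dvd j - i" by (auto dest: dvd_imp_le)
  then show "(i + r) mod m \<noteq> (j + r) mod m"
    using mod_eq_dvd_iff_nat[of "i + r" "j + r" m] \<open>i < j\<close> by auto
qed auto

lemma measurable_rot [measurable]: "rot m r \<in> measurable (walk_space m) (walk_space m)"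
  unfolding rot_def walk_space_def
  by (intro measurable_restrict measurable_component_singleton) auto

lemma distr_walk_space_rot: "distr (walk_space m) (walk_space m) (rot m r) = walk_space m"
  using distr_PiM_reindex[of "{..<m}" "\<lambda>_. step_dist" "\<lambda>i. (i + r) mod m" "{..<m}"]
    inj_on_add_mod[of r m] prob_space_step_dist
  unfolding walk_space_def rot_def by auto

lemma nn_integral_walk_space_rot:
  assumes [measurable]: "F \<in> borel_measurable (walk_space m)"
  shows "(\<integral>\<^sup>+w. F (rot m r w) \<partial>walk_space m) = (\<integral>\<^sup>+w. F w \<partial>walk_space m)"
proof -
  have "(\<integral>\<^sup>+w. F (rot m r w) \<partial>walk_space m) =
      (\<integral>\<^sup>+w. F w \<partial>distr (walk_space m) (walk_space m) (rot m r))"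
    by (rule nn_integral_distr[symmetric]) measurable
  then show ?thesis by (simp add: distr_walk_space_rot)
qed

lemma borel_measurable_gap [measurable]: "gap m \<in> borel_measurable (walk_space m)"
  unfolding gap_def by measurable auto

lemma nn_integral_gap_pos_part:
  assumes m: "0 < m" and J: "J \<subseteq> {0<..}" "J \<in> sets borel"
  shows "of_nat m * (\<integral>\<^sup>+w. ennreal (max 0 (gap m w)) * indicator J (partial_sum w m) \<partial>walk_space m) =
    (\<integral>\<^sup>+w. ennreal (partial_sum w m) * indicator J (partial_sum w m) \<partial>walk_space m)"
proof -
  define G where "G w = ennreal (max 0 (gap m w)) * indicator J (partial_sum w m)" for w
  have G_measurable [measurable]: "G \<in> borel_measurable (walk_space m)"
    using J(2) unfolding G_def by measurable
  have rotations: "(\<Sum>r<m. G (rot m r w)) = ennreal (partial_sum w m) * indicator J (partial_sum w m)" for w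
  proof (cases "partial_sum w m \<in> J")
    case True
    then have "0 < partial_sum w m" using J(1) by auto
    then have "(\<Sum>r<m. ennreal (max 0 (gap m (rot m r w)))) = ennreal (partial_sum w m)"
      by (subst sum_ennreal) (simp_all add: sum_rot_gap_pos_part[OF m])
    with True show ?thesis by (simp add: G_def partial_sum_rot_self)
  qed (simp add: G_def partial_sum_rot_self)
  have "of_nat m * (\<integral>\<^sup>+w. G w \<partial>walk_space m) = (\<Sum>r<m. (\<integral>\<^sup>+w. G (rot m r w) \<partial>walk_space m))"
    by (simp add: nn_integral_walk_space_rot)
  also have "\<dots> = (\<integral>\<^sup>+w. (\<Sum>r<m. G (rot m r w)) \<partial>walk_space m)"
    by (rule nn_integral_sum[symmetric]) measurable
  also have "\<dots> = (\<integral>\<^sup>+w. ennreal (partial_sum w m) * indicator J (partial_sum w m) \<partial>walk_space m)"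
    by (simp only: rotations)
  finally show ?thesis
    by (simp only: G_def)
qed

section \<open>Estimates for the walk kept below a level\<close>

definition max_below_end_in :: "nat \<Rightarrow> real \<Rightarrow> real set \<Rightarrow> (nat \<Rightarrow> real) set" where
  "max_below_end_in m y A =
    {w \<in> space (walk_space m). (\<forall>j<m. partial_sum w j < y) \<and> partial_sum w m \<in> A}"

lemma sets_max_below_end_in [measurable]:
  assumes [measurable]: "A \<in> sets borel"
  shows "max_below_end_in m y A \<in> sets (walk_space m)"
proof -
  have [measurable]: "Measurable.pred (walk_space m) (\<lambda>w. \<forall>j<m. partial_sum w j < y)"
    by (rule pred_partial_sums_less) simp
  show ?thesis
    unfolding max_below_end_in_def by measurable
qed

lemma nn_integral_step_dist_Ioc_le:
  assumes "a \<le> b"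
  shows "(\<integral>\<^sup>+u. indicator {a<..b} (z + u) \<partial>step_dist) \<le> ennreal (b - a) * indicator {a - 1<..} z"
proof -
  have "(\<integral>\<^sup>+u. indicator {a<..b} (z + u) \<partial>step_dist) =
      (\<integral>\<^sup>+u. ennreal (step_density u) * indicator {a<..b} (z + u) \<partial>lborel)"
    by (rule nn_integral_step_dist) measurable
  also have "\<dots> \<le> (\<integral>\<^sup>+u. indicator {a - 1<..} z * indicator {a - z<..b - z} u \<partial>lborel)"
    by (intro nn_integral_mono)
      (auto simp: step_density_le_1 split: split_indicator, simp add: step_density_def)
  also have "\<dots> = ennreal (b - a) * indicator {a - 1<..} z"
    using assms by (simp add: nn_integral_cmult_indicator mult.commute)
  finally show ?thesis .
qed

lemma emeasure_max_below_end_in_Ioc_le: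
  assumes "a \<le> b"
  shows "emeasure (walk_space (Suc n)) (max_below_end_in (Suc n) y {a<..b}) \<le>
    ennreal (b - a) * emeasure (walk_space n)
      {w \<in> space (walk_space n). (\<forall>j<Suc n. partial_sum w j < y) \<and> a - 1 < partial_sum w n}"
    (is "_ \<le> _ * emeasure _ ?G")
proof -
  have [measurable]: "Measurable.pred (walk_space n) (\<lambda>w. \<forall>j<Suc n. partial_sum w j < y)"
    by (rule pred_partial_sums_less) simp
  have G: "?G \<in> sets (walk_space n)" by measurable
  have E: "max_below_end_in (Suc n) y {a<..b} \<in> sets (walk_space (Suc n))" by measurable
  have "emeasure (walk_space (Suc n)) (max_below_end_in (Suc n) y {a<..b}) =
      (\<integral>\<^sup>+w. (\<integral>\<^sup>+u. indicator (max_below_end_in (Suc n) y {a<..b}) (w(n := u)) \<partial>step_dist) \<partial>walk_space n)"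
    using nn_integral_walk_space_Suc[of "indicator (max_below_end_in (Suc n) y {a<..b})" n] E by simp
  also have "\<dots> \<le> (\<integral>\<^sup>+w. ennreal (b - a) * indicator ?G w \<partial>walk_space n)"
  proof (intro nn_integral_mono)
    fix w assume w: "w \<in> space (walk_space n)"
    define c :: ennreal where "c = (if \<forall>j<Suc n. partial_sum w j < y then 1 else 0)"
    have "indicator (max_below_end_in (Suc n) y {a<..b}) (w(n := u)) =
        c * indicator {a<..b} (partial_sum w n + u)" for u
      using fun_upd_in_space_walk_space[OF w, of u]
      by (auto simp: c_def max_below_end_in_def partial_sum_fun_upd partial_sum_fun_upd_Suc
          less_Suc_eq_le split: split_indicator)
    then have "(\<integral>\<^sup>+u. indicator (max_below_end_in (Suc n) y {a<..b}) (w(n := u)) \<partial>step_dist) =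
        c * (\<integral>\<^sup>+u. indicator {a<..b} (partial_sum w n + u) \<partial>step_dist)"
      by (simp add: nn_integral_cmult)
    also have "\<dots> \<le> c * (ennreal (b - a) * indicator {a - 1<..} (partial_sum w n))"
      by (intro mult_left_mono nn_integral_step_dist_Ioc_le assms) simp
    also have "\<dots> = ennreal (b - a) * indicator ?G w"
      using w by (auto simp: c_def split: split_indicator)
    finally show "(\<integral>\<^sup>+u. indicator (max_below_end_in (Suc n) y {a<..b}) (w(n := u)) \<partial>step_dist) \<le>
        ennreal (b - a) * indicator ?G w" .
  qed
  also have "\<dots> = ennreal (b - a) * emeasure (walk_space n) ?G"
    using G by (simp add: nn_integral_cmult)
  finally show ?thesis .
qed

lemma emeasure_walk_space_Suc_ge:
  assumes G: "G \<in> sets (walk_space n)" and I: "I \<in> sets borel"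
    and H: "H \<in> sets (walk_space (Suc n))"
    and extend: "\<And>w u. w \<in> G \<Longrightarrow> u \<in> I \<Longrightarrow> w(n := u) \<in> H"
  shows "emeasure (walk_space n) G * emeasure step_dist I \<le> emeasure (walk_space (Suc n)) H"
proof -
  have "emeasure (walk_space n) G * emeasure step_dist I =
      (\<integral>\<^sup>+w. (\<integral>\<^sup>+u. indicator G w * indicator I u \<partial>step_dist) \<partial>walk_space n)"
    using G I by (simp add: nn_integral_cmult_indicator nn_integral_multc)
  also have "\<dots> \<le> (\<integral>\<^sup>+w. (\<integral>\<^sup>+u. indicator H (w(n := u)) \<partial>step_dist) \<partial>walk_space n)"
    using extend by (intro nn_integral_mono) (auto split: split_indicator)
  also have "\<dots> = emeasure (walk_space (Suc n)) H"
    using nn_integral_walk_space_Suc[of "indicator H" n] H by simp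
  finally show ?thesis .
qed

lemma emeasure_step_dist_Ioc_ge: "ennreal (7/64) \<le> emeasure step_dist {7/8<..1}"
proof -
  have "ennreal (7/8) * indicator {7/8<..1::real} u \<le> ennreal (step_density u) * indicator {7/8<..1} u" for u
    using exp_ge_add_one_self[of "u - 1"]
    by (auto simp: step_density_def split: split_indicator intro!: ennreal_leI)
  then have "(\<integral>\<^sup>+u. ennreal (7/8) * indicator {7/8<..1::real} u \<partial>lborel) \<le>
      (\<integral>\<^sup>+u. ennreal (step_density u) * indicator {7/8<..1} u \<partial>lborel)"
    by (rule nn_integral_mono)
  also have "\<dots> = emeasure step_dist {7/8<..1}"
    by (simp add: step_dist_def emeasure_density)
  finally show ?thesis
    by (simp add: nn_integral_cmult ennreal_mult[symmetric])
qed

lemma gap_after_two_large_steps: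
  assumes below: "\<forall>j<Suc n. partial_sum w j < y" and a: "y - 1/8 \<le> a" "a - 1 < partial_sum w n"
    and large: "7/8 < w n" "w n \<le> 1" "7/8 < u" "u \<le> 1"
  shows "1/2 < gap (Suc (Suc n)) (w(Suc n := u))"
    and "partial_sum (w(Suc n := u)) (Suc (Suc n)) \<in> {y + 5/8<..y + 2}"
proof -
  let ?w = "w(Suc n := u)"
  have end_sum: "partial_sum ?w (Suc (Suc n)) = partial_sum w n + w n + u"
    using partial_sum_fun_upd_Suc[of w "Suc n" u] partial_sum_Suc[of w n] by simp
  have "partial_sum ?w j < partial_sum ?w (Suc (Suc n)) - 1/2" if "j < Suc (Suc n)" for j
  proof (cases "j = Suc n")
    case True
    then show ?thesis
      using end_sum large partial_sum_fun_upd[of n "Suc n" w u] by (simp add: partial_sum_Suc)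
  next
    case False
    then have "partial_sum ?w j = partial_sum w j" "partial_sum w j < y"
      using that below by (simp_all add: partial_sum_fun_upd)
    then show ?thesis using end_sum a large by linarith
  qed
  then have "Max ((\<lambda>j. partial_sum ?w j) ` {..<Suc (Suc n)}) < partial_sum ?w (Suc (Suc n)) - 1/2"
    by (subst Max_less_iff) auto
  then show "1/2 < gap (Suc (Suc n)) ?w"
    unfolding gap_def by simp
  show "partial_sum ?w (Suc (Suc n)) \<in> {y + 5/8<..y + 2}"
    using end_sum below a large by auto
qed

lemma emeasure_gap_after_two_large_steps:
  assumes a: "y - 1/8 \<le> a"
  shows "emeasure (walk_space n)
      {w \<in> space (walk_space n). (\<forall>j<Suc n. partial_sum w j < y) \<and> a - 1 < partial_sum w n} *
      ennreal (7/64) * ennreal (7/64) \<le>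
    emeasure (walk_space (Suc (Suc n))) {w \<in> space (walk_space (Suc (Suc n))).
      1/2 < gap (Suc (Suc n)) w \<and> partial_sum w (Suc (Suc n)) \<in> {y + 5/8<..y + 2}}"
    (is "emeasure _ ?G * _ * _ \<le> emeasure _ ?H")
proof -
  let ?I = "{7/8<..1::real}"
  let ?G' = "{w \<in> space (walk_space (Suc n)).
    (\<forall>j<Suc n. partial_sum w j < y) \<and> a - 1 < partial_sum w n \<and> w n \<in> ?I}"
  have [measurable]: "Measurable.pred (walk_space n) (\<lambda>w. \<forall>j<Suc n. partial_sum w j < y)"
    "Measurable.pred (walk_space (Suc n)) (\<lambda>w. \<forall>j<Suc n. partial_sum w j < y)"
    by (rule pred_partial_sums_less; simp)+
  have [measurable]: "(\<lambda>w. w n) \<in> borel_measurable (walk_space (Suc n))"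
    unfolding walk_space_def
    by (auto intro!: measurable_component_singleton[where M="\<lambda>_. step_dist", simplified])
  have G: "?G \<in> sets (walk_space n)" and G': "?G' \<in> sets (walk_space (Suc n))"
    and H: "?H \<in> sets (walk_space (Suc (Suc n)))" and I: "?I \<in> sets borel"
    by measurable
  have "emeasure (walk_space n) ?G * emeasure step_dist ?I \<le> emeasure (walk_space (Suc n)) ?G'"
    by (rule emeasure_walk_space_Suc_ge[OF G I G'])
      (auto simp: fun_upd_in_space_walk_space partial_sum_fun_upd less_Suc_eq_le)
  moreover have "emeasure (walk_space (Suc n)) ?G' * emeasure step_dist ?I \<le>
      emeasure (walk_space (Suc (Suc n))) ?H"
  proof (rule emeasure_walk_space_Suc_ge[OF G' I H])
    fix w u assume "w \<in> ?G'" "u \<in> ?I"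
    then show "w(Suc n := u) \<in> ?H"
      using gap_after_two_large_steps[of n w y a u] a by (auto simp: fun_upd_in_space_walk_space)
  qed
  ultimately show ?thesis
    using emeasure_step_dist_Ioc_ge
    by (meson mult_left_mono mult_right_mono order_trans zero_le)
qed

lemma emeasure_gap_gt_le:
  assumes m: "1 \<le> m" and c: "0 < c" and J: "J \<subseteq> {0<..}" "J \<in> sets borel"
  shows "of_nat m * (ennreal c * emeasure (walk_space m)
      {w \<in> space (walk_space m). c < gap m w \<and> partial_sum w m \<in> J}) \<le>
    (\<integral>\<^sup>+s. ennreal (f_dens m s) * (ennreal s * indicator J s) \<partial>lborel)"
    (is "_ * (_ * emeasure _ ?H) \<le> _")
proof -
  have [measurable]: "J \<in> sets borel" by (fact J(2))
  have "ennreal c * emeasure (walk_space m) ?H = (\<integral>\<^sup>+w. ennreal c * indicator ?H w \<partial>walk_space m)"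
    by (simp add: nn_integral_cmult_indicator)
  also have "\<dots> \<le> (\<integral>\<^sup>+w. ennreal (max 0 (gap m w)) * indicator J (partial_sum w m) \<partial>walk_space m)"
    by (intro nn_integral_mono) (auto split: split_indicator intro!: ennreal_leI)
  finally have "of_nat m * (ennreal c * emeasure (walk_space m) ?H) \<le>
      of_nat m * (\<integral>\<^sup>+w. ennreal (max 0 (gap m w)) * indicator J (partial_sum w m) \<partial>walk_space m)"
    by (rule mult_left_mono) simp
  also have "\<dots> = (\<integral>\<^sup>+w. ennreal (partial_sum w m) * indicator J (partial_sum w m) \<partial>walk_space m)"
    using m J by (intro nn_integral_gap_pos_part) auto
  also have "\<dots> = (\<integral>\<^sup>+s. ennreal (f_dens m s) * (ennreal s * indicator J s) \<partial>lborel)"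
    using nn_integral_partial_sum[OF m, of "\<lambda>s. ennreal s * indicator J s"] by simp
  finally show ?thesis .
qed

lemma nn_integral_f_dens_Suc_Ioc_le:
  assumes k: "3 \<le> k" and y: "0 \<le> y" "y + 1 < real k / 2"
  shows "(\<integral>\<^sup>+s. ennreal (f_dens (Suc k) s) * (ennreal s * indicator {y + 5/8<..y + 2} s) \<partial>lborel) \<le>
    ennreal (55/2 * (y + 2) * f_dens k y)"
proof -
  have "ennreal (f_dens (Suc k) s) * (ennreal s * indicator {y + 5/8<..y + 2} s) \<le>
      ennreal (20 * f_dens k y * (y + 2)) * indicator {y + 5/8<..y + 2} s" for s
  proof (cases "s \<in> {y + 5/8<..y + 2}")
    case True
    then have "f_dens (Suc k) s * s \<le> 20 * f_dens k y * (y + 2)"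
      using y f_dens_Suc_le_f_dens[OF k y, of s] by (intro mult_mono) (auto simp: f_dens_nonneg)
    then show ?thesis
      using True y by (simp add: ennreal_mult[symmetric] f_dens_nonneg ennreal_leI)
  qed simp
  then have "(\<integral>\<^sup>+s. ennreal (f_dens (Suc k) s) * (ennreal s * indicator {y + 5/8<..y + 2} s) \<partial>lborel) \<le>
      (\<integral>\<^sup>+s. ennreal (20 * f_dens k y * (y + 2)) * indicator {y + 5/8<..y + 2} s \<partial>lborel)"
    by (rule nn_integral_mono)
  also have "\<dots> = ennreal (20 * f_dens k y * (y + 2)) * ennreal (11/8)"
    by (subst nn_integral_cmult_indicator) auto
  also have "\<dots> = ennreal (55/2 * (y + 2) * f_dens k y)"
    using y by (simp add: ennreal_mult[symmetric] f_dens_nonneg)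
  finally show ?thesis .
qed

lemma measure_large_final_gap_le:
  assumes k: "3 \<le> k" and y: "0 \<le> y" "y + 1 < real k / 2"
  shows "real (Suc k) * measure (walk_space (Suc k)) {w \<in> space (walk_space (Suc k)).
      1/2 < gap (Suc k) w \<and> partial_sum w (Suc k) \<in> {y + 5/8<..y + 2}} \<le>
    55 * (y + 2) * f_dens k y"
    (is "_ * measure _ ?H \<le> _")
proof -
  have "ennreal (real (Suc k) * (1/2 * measure (walk_space (Suc k)) ?H)) =
      of_nat (Suc k) * (ennreal (1/2) * emeasure (walk_space (Suc k)) ?H)"
    by (simp only: emeasure_walk_space_eq_measure ennreal_of_nat_eq_real_of_nat ennreal_mult
        of_nat_0_le_iff measure_nonneg divide_nonneg_nonneg zero_le_one zero_le_numeral
        mult_nonneg_nonneg)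
  also have "\<dots> \<le> (\<integral>\<^sup>+s. ennreal (f_dens (Suc k) s) * (ennreal s * indicator {y + 5/8<..y + 2} s) \<partial>lborel)"
    using y by (intro emeasure_gap_gt_le) auto
  also have "\<dots> \<le> ennreal (55/2 * (y + 2) * f_dens k y)"
    by (rule nn_integral_f_dens_Suc_Ioc_le[OF k y])
  finally show ?thesis
    using y by (simp add: ennreal_le_iff f_dens_nonneg)
qed

lemma measure_max_below_end_in_Ioc_le:
  assumes k: "3 \<le> k" and y: "0 \<le> y" "y + 1 < real k / 2" and a: "y - 1/8 \<le> a" "a \<le> b"
  shows "measure (walk_space k) (max_below_end_in k y {a<..b}) \<le>
    (b - a) * (10000 * (y + 1) / real k * f_dens k y)"
proof -
  obtain n where n: "k = Suc n" using k by (cases k) auto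
  let ?G = "{w \<in> space (walk_space n). (\<forall>j<Suc n. partial_sum w j < y) \<and> a - 1 < partial_sum w n}"
  let ?H = "{w \<in> space (walk_space (Suc k)).
    1/2 < gap (Suc k) w \<and> partial_sum w (Suc k) \<in> {y + 5/8<..y + 2}}"
  have E_G: "measure (walk_space k) (max_below_end_in k y {a<..b}) \<le> (b - a) * measure (walk_space n) ?G"
    using emeasure_max_below_end_in_Ioc_le[OF a(2), of n y] a(2) n
    by (simp add: emeasure_walk_space_eq_measure ennreal_mult[symmetric] ennreal_le_iff)
  have G_H: "measure (walk_space n) ?G * (7/64) * (7/64) \<le> measure (walk_space (Suc k)) ?H"
    using emeasure_gap_after_two_large_steps[OF a(1), of n] n
    by (simp add: emeasure_walk_space_eq_measure ennreal_mult[symmetric] ennreal_le_iff)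
  have H_f: "real (Suc k) * measure (walk_space (Suc k)) ?H \<le> 55 * (y + 2) * f_dens k y"
    by (rule measure_large_final_gap_le[OF k y])
  define Q where "Q = (y + 1) / real k * f_dens k y"
  have "(y + 2) / real (Suc k) \<le> 2 * ((y + 1) / real k)"
    using y k by (simp add: field_simps)
  then have "f_dens k y * ((y + 2) / real (Suc k)) \<le> f_dens k y * (2 * ((y + 1) / real k))"
    using f_dens_nonneg by (rule mult_left_mono)
  moreover have "f_dens k y * (2 * ((y + 1) / real k)) = 2 * Q"
    unfolding Q_def by simp
  moreover have "measure (walk_space (Suc k)) ?H \<le> 55 * (f_dens k y * ((y + 2) / real (Suc k)))"
    using H_f by (simp add: field_simps del: of_nat_Suc)
  moreover have "0 \<le> Q"
    unfolding Q_def using y f_dens_nonneg by simp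
  (* (64/7)^2 * 110 < 10000 *)
  ultimately have "measure (walk_space n) ?G \<le> 10000 * Q"
    using G_H by linarith
  then have "(b - a) * measure (walk_space n) ?G \<le> (b - a) * (10000 * Q)"
    using a(2) by (simp add: mult_left_mono)
  moreover have "(b - a) * (10000 * Q) = (b - a) * (10000 * (y + 1) / real k * f_dens k y)"
    unfolding Q_def by simp
  ultimately show ?thesis
    using E_G by linarith
qed

section \<open>One-sided derivatives of the distribution function\<close>

lemma has_real_derivative_le_of_increments:
  fixes F :: "real \<Rightarrow> real"
  assumes deriv: "(F has_real_derivative D) (at_left x) \<or> (F has_real_derivative D) (at_right x)"
    and \<delta>: "0 < \<delta>"
    and incr: "\<And>a b. x - \<delta> < a \<Longrightarrow> a < b \<Longrightarrow> b < x + \<delta> \<Longrightarrow> a = x \<or> b = x \<Longrightarrow>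
      F b - F a \<le> (b - a) * K"
  shows "D \<le> K"
proof -
  have quotient: "(F t - F x) / (t - x) \<le> K" if "x - \<delta> < t" "t < x + \<delta>" "t \<noteq> x" for t
  proof (cases "t < x")
    case True
    then have "F x - F t \<le> (x - t) * K" using that by (intro incr) auto
    then show ?thesis using True by (simp add: divide_simps) (simp add: algebra_simps)
  next
    case False
    then have "F t - F x \<le> (t - x) * K" using that by (intro incr) auto
    then show ?thesis using False that by (simp add: divide_le_eq mult.commute)
  qed
  from deriv show ?thesis
  proof
    assume "(F has_real_derivative D) (at_left x)"
    then have "((\<lambda>t. (F t - F x) / (t - x)) \<longlongrightarrow> D) (at_left x)"
      by (simp add: has_field_derivative_iff)
    moreover have "\<forall>\<^sub>F t in at_left x. (F t - F x) / (t - x) \<le> K"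
      unfolding eventually_at_left_field using \<delta> quotient by (intro exI[of _ "x - \<delta>"]) auto
    ultimately show "D \<le> K" by (rule tendsto_upperbound) simp
  next
    assume "(F has_real_derivative D) (at_right x)"
    then have "((\<lambda>t. (F t - F x) / (t - x)) \<longlongrightarrow> D) (at_right x)"
      by (simp add: has_field_derivative_iff)
    moreover have "\<forall>\<^sub>F t in at_right x. (F t - F x) / (t - x) \<le> K"
      unfolding eventually_at_right_field using \<delta> quotient by (intro exI[of _ "x + \<delta>"]) auto
    ultimately show "D \<le> K" by (rule tendsto_upperbound) simp
  qed
qed

lemma walk_cdf_diff:
  assumes "a \<le> b"
  shows "walk_cdf k y b - walk_cdf k y a = measure (walk_space k) (max_below_end_in k y {a<..b})"
proof -
  interpret prob_space "walk_space k"
    by (rule prob_space_walk_space)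
  have [measurable]: "Measurable.pred (walk_space k) (\<lambda>w. \<forall>j<k. partial_sum w j < y)"
    by (rule pred_partial_sums_less) simp
  let ?A = "\<lambda>x. {w \<in> space (walk_space k). (\<forall>j<k. partial_sum w j < y) \<and> partial_sum w k \<le> x}"
  have "max_below_end_in k y {a<..b} = ?A b - ?A a" and "?A a \<subseteq> ?A b"
    using assms by (auto simp: max_below_end_in_def)
  then show ?thesis
    unfolding walk_cdf_def by (simp add: finite_measure_Diff)
qed

lemma measure_max_below_end_in_le_density_bound:
  assumes k: "1 \<le> k" and ab: "a < b" and M: "\<And>s. a < s \<Longrightarrow> s \<le> b \<Longrightarrow> f_dens k s \<le> M"
  shows "measure (walk_space k) (max_below_end_in k y {a<..b}) \<le> (b - a) * M"
proof -
  have M_nonneg: "0 \<le> M"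
    using M[of b] f_dens_nonneg[of k b] ab by auto
  have "emeasure (walk_space k) (max_below_end_in k y {a<..b}) =
      (\<integral>\<^sup>+w. indicator (max_below_end_in k y {a<..b}) w \<partial>walk_space k)"
    by (rule nn_integral_indicator[symmetric]) measurable
  also have "\<dots> \<le> (\<integral>\<^sup>+w. indicator {a<..b} (partial_sum w k) \<partial>walk_space k)"
    by (intro nn_integral_mono) (auto simp: max_below_end_in_def split: split_indicator)
  also have "\<dots> = (\<integral>\<^sup>+s. ennreal (f_dens k s) * indicator {a<..b} s \<partial>lborel)"
    by (rule nn_integral_partial_sum[OF k]) measurable
  also have "\<dots> \<le> (\<integral>\<^sup>+s. ennreal M * indicator {a<..b} s \<partial>lborel)"
    by (intro nn_integral_mono) (auto intro!: ennreal_leI M split: split_indicator)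
  also have "\<dots> = ennreal ((b - a) * M)"
    using ab M_nonneg by (simp add: nn_integral_cmult_indicator ennreal_mult[symmetric] mult.commute)
  finally show ?thesis
    using ab M_nonneg by (simp add: emeasure_walk_space_eq_measure)
qed

lemma walk_cdf_derivative_le_f_dens:
  assumes k: "1 \<le> k"
    and deriv: "(walk_cdf k y has_real_derivative D) (at_left x) \<or>
      (walk_cdf k y has_real_derivative D) (at_right x)"
  shows "D \<le> f_dens k x"
proof (rule field_le_epsilon)
  fix e :: real assume "0 < e"
  then obtain d where d: "0 < d" and near: "\<And>s. \<bar>s - x\<bar> < d \<Longrightarrow> f_dens k s \<le> f_dens k x + e"
    using f_dens_upper_semicontinuous by blast
  show "D \<le> f_dens k x + e"
  proof (rule has_real_derivative_le_of_increments[OF deriv d])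
    fix a b assume "x - d < a" "a < b" "b < x + d" "a = x \<or> b = x"
    then show "walk_cdf k y b - walk_cdf k y a \<le> (b - a) * (f_dens k x + e)"
      by (subst walk_cdf_diff) (auto intro!: measure_max_below_end_in_le_density_bound k near)
  qed
qed

lemma walk_cdf_derivative_le_bulk:
  assumes k: "3 \<le> k" and y: "0 \<le> y" "y + 1 < real k / 2" and \<mu>: "0 \<le> \<mu>"
    and deriv: "(walk_cdf k y has_real_derivative D) (at_left (y + \<mu>)) \<or>
      (walk_cdf k y has_real_derivative D) (at_right (y + \<mu>))"
  shows "D \<le> 10000 * (y + 1) / real k * f_dens k y"
proof (rule has_real_derivative_le_of_increments[OF deriv])
  fix a b assume "y + \<mu> - 1/8 < a" "a < b"
  then have "y - 1/8 \<le> a" "a \<le> b"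
    using \<mu> by simp_all
  then show "walk_cdf k y b - walk_cdf k y a \<le> (b - a) * (10000 * (y + 1) / real k * f_dens k y)"
    unfolding walk_cdf_diff[OF \<open>a \<le> b\<close>] by (rule measure_max_below_end_in_Ioc_le[OF k y])
qed simp

lemma walk_cdf_derivative_le_exp_f_dens:
  assumes k: "1 \<le> k" and \<mu>: "0 \<le> \<mu>"
    and deriv: "(walk_cdf k y has_real_derivative D) (at_left (y + \<mu>)) \<or>
      (walk_cdf k y has_real_derivative D) (at_right (y + \<mu>))"
  shows "D \<le> exp \<mu> * f_dens k y"
  using walk_cdf_derivative_le_f_dens[OF k deriv] f_dens_add_le[OF \<mu>] by (rule order_trans)

theorem lemma5:
  "\<exists>C>0. \<forall>k::nat. \<forall>y::real. \<forall>\<mu>::real. \<forall>D::real.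
     k \<ge> 1 \<and> y \<ge> 0 \<and> 0 \<le> \<mu> \<and> \<mu> \<le> 1 \<and>
     ((walk_cdf k y has_real_derivative D) (at_left (y + \<mu>)) \<or>
      (walk_cdf k y has_real_derivative D) (at_right (y + \<mu>)))
     \<longrightarrow> D \<le> C * (y + 1) / real k * f_dens k y"
proof (intro exI[of _ 10000] conjI allI impI)
  fix k :: nat and y \<mu> D :: real
  assume "k \<ge> 1 \<and> y \<ge> 0 \<and> 0 \<le> \<mu> \<and> \<mu> \<le> 1 \<and>
     ((walk_cdf k y has_real_derivative D) (at_left (y + \<mu>)) \<or>
      (walk_cdf k y has_real_derivative D) (at_right (y + \<mu>)))"
  then have k: "1 \<le> k" and y: "0 \<le> y" and \<mu>: "0 \<le> \<mu>" "\<mu> \<le> 1"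
    and deriv: "(walk_cdf k y has_real_derivative D) (at_left (y + \<mu>)) \<or>
      (walk_cdf k y has_real_derivative D) (at_right (y + \<mu>))"
    by auto
  show "D \<le> 10000 * (y + 1) / real k * f_dens k y"
  proof (cases "3 \<le> k \<and> y + 1 < real k / 2")
    case True
    then show ?thesis using walk_cdf_derivative_le_bulk y \<mu> deriv by blast
  next
    case False
    then have "3 \<le> 10000 * (y + 1) / real k"
      using k y by (auto simp: field_simps)
    moreover have "exp \<mu> \<le> 3"
      using \<mu>(2) exp_le order_trans[of "exp \<mu>" "exp 1" 3] by simp
    ultimately have "exp \<mu> \<le> 10000 * (y + 1) / real k"
      by linarith
    then have "exp \<mu> * f_dens k y \<le> 10000 * (y + 1) / real k * f_dens k y"
      by (intro mult_right_mono f_dens_nonneg)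
    then show ?thesis
      using walk_cdf_derivative_le_exp_f_dens[OF k \<mu>(1) deriv] by linarith
  qed
qed simp

end
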